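(* Let $\mathcal{X}=\prod_{r=1}^d\mathcal{Z}_r$ be a product of nonempty convex compact subsets of Euclidean spaces, $F$ an $L$-Lipschitz operator on $\mathcal{X}$ with components $F_r$, $B_F:=\max_r\sup_{x}\|F_r(x)\|_2$, and suppose the average $(\alpha,\ell,h)$-generalized Minty property holds. Then the iterates of rescaled optimistic gradient descent with learning rate $\eta\le\frac14\sqrt{\frac{\ell}{h^3L^2+hB_F^2\alpha^2d}}$ satisfy, for every $T\in\mathbb{N}$, $$\sum_{t=1}^T\Big(\|x^{(t)}-\hat x^{(t)}\|_2^2+\|x^{(t)}-\hat x^{(t+1)}\|_2^2\Big)\le\frac{2D_{\mathcal{X}}^2h}{\ell}.$$
   Context: $D_{\mathcal{X}}$ is the $\ell_2$ diameter of $\mathcal{X}$. $\mathbf{1}_{\mathcal{Z}_r}$ is the indicator vector of the coordinates of $\mathcal{Z}_r$; $\circ$ is the coordinatewise product; vector inequalities are coordinatewise. $A(x)=\sum_r a_r(x)\mathbf{1}_{\mathcal{Z}_r}$ with each $a_r$ $\alpha$-Lipschitz and $0<\ell\le A(x)\le h$; $W(x)=\sum_r w_r(x)\mathbf{1}_{\mathcal{Z}_r}$ with $0<\ell\le W(x)\le h$. The average $(\alpha,\ell,h)$-generalized Minty property: for every $T$ and sequence $(x^{(t)})_{t\le T}$ in $\mathcal{X}$ there is $x^\star\in\mathcal{X}$ with $\sum_{t=1}^T\langle x^{(t)}-x^\star,F(x^{(t)})\circ A(x^{(t)})\circ W(x^\star)\rangle\ge0$. Rescaled optimistic gradient descent: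 from arbitrary $x^{(0)}=\hat x^{(1)}\in\mathcal{X}$, $x^{(t)}=\Pi_{\mathcal{X}}(\hat x^{(t)}-\eta A(x^{(t-1)})\circ F(x^{(t-1)}))$ and $\hat x^{(t+1)}=\Pi_{\mathcal{X}}(\hat x^{(t)}-\eta A(x^{(t)})\circ F(x^{(t)}))$ for $t\ge1$, $\Pi_{\mathcal{X}}$ the Euclidean projection. *)

theory Defs
  imports "HOL-Analysis.Analysis"
begin

text \<open>Coordinates of the ambient space real^'n are partitioned into blocks
  1..d via blk; block r carries the factor Z_r.\<close>

definition ind_vec :: "('n::finite \<Rightarrow> nat) \<Rightarrow> nat \<Rightarrow> real^'n" where
  "ind_vec blk r = (\<chi> i. if blk i = r then 1 else 0)"

definition block_proj :: "('n::finite \<Rightarrow> nat) \<Rightarrow> nat \<Rightarrow> real^'n \<Rightarrow> real^'n" where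
  "block_proj blk r v = ind_vec blk r * v"

definition block_vec :: "('n::finite \<Rightarrow> nat) \<Rightarrow> nat \<Rightarrow> (nat \<Rightarrow> real) \<Rightarrow> real^'n" where
  "block_vec blk d c = (\<Sum>r\<in>{1..d}. c r *\<^sub>R ind_vec blk r)"

definition block_space :: "('n::finite \<Rightarrow> nat) \<Rightarrow> nat \<Rightarrow> (real^'n) set" where
  "block_space blk r = {v. \<forall>i. blk i \<noteq> r \<longrightarrow> v $ i = 0}"

definition block_prod :: "('n::finite \<Rightarrow> nat) \<Rightarrow> nat \<Rightarrow> (nat \<Rightarrow> (real^'n) set) \<Rightarrow> (real^'n) set" where
  "block_prod blk d Z = {x. \<forall>r\<in>{1..d}. block_proj blk r x \<in> Z r}"

definition block_bound :: "('n::finite \<Rightarrow> nat) \<Rightarrow> nat \<Rightarrow> (real^'n) set \<Rightarrow> (real^'n \<Rightarrow> real^'n) \<Rightarrow> real" where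
  "block_bound blk d X F = Max ((\<lambda>r. SUP x\<in>X. norm (block_proj blk r (F x))) ` {1..d})"

end

theory Submission
  imports Defs
begin

(* Fix the Minty point xs and write W = W(xs).  Because X is the product of the
   blocks Z_r and W is constant on each block, the Euclidean projection onto X
   also satisfies the variational inequality of the projection for the
   W-weighted inner product.  Adding the two projection inequalities of one
   optimistic step in that inner product gives the three-point estimate:
   the weighted distance of hat x^(t) to xs decreases by eta times the Minty
   term and by l/2 times the squared gaps |x^(t) - hat x^(t)|^2 and
   |x^(t) - hat x^(t+1)|^2, up to a prediction error.  The map x -> A(x) o F(x)
   is Lipschitz with squared constant 2 (h^2 L^2 + alpha^2 B_F^2 d), so the
   step size condition bounds the prediction error by l/4 times the current
   gap and the previous one.  Summing over t, everything telescopes, the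
   average Minty property makes the Minty terms nonnegative in total, and
   (l/4) * (sum of gaps) <= (h/2) |x^(0) - xs|^2 <= (h/2) D_X^2. *)

lemma power2_norm_eq_sum_cart: "norm (v::real^'n)^2 = (\<Sum>i\<in>UNIV. (v $ i)^2)"
  unfolding power2_norm_eq_inner inner_vec_def by (simp add: power2_eq_square)

lemma block_vec_nth:
  "block_vec blk d c $ i = (if blk i \<in> {1..d} then c (blk i) else 0)"
  unfolding block_vec_def ind_vec_def
  by (simp add: if_distrib[of "\<lambda>x. _ * x"] cong: if_cong)

lemma block_vec_diff:
  "block_vec blk d c - block_vec blk d c' = block_vec blk d (\<lambda>r. c r - c' r)"
  by (simp add: vec_eq_iff block_vec_nth)

lemma nonneg_block_weights:
  assumes "\<forall>r\<in>{1..d}. \<exists>i. blk i = r" and "\<forall>i. 0 \<le> block_vec blk d c $ i"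
  shows "\<forall>r\<in>{1..d}. 0 \<le> c r"
  using assms by (metis block_vec_nth)

lemma block_proj_nth: "block_proj blk r v $ i = (if blk i = r then v $ i else 0)"
  unfolding block_proj_def ind_vec_def by simp

lemma linear_block_proj: "linear (block_proj blk r)"
  by (rule linearI) (auto simp: vec_eq_iff block_proj_nth)

lemma convex_block_prod:
  assumes "\<forall>r\<in>{1..d}. convex (Z r)"
  shows "convex (block_prod blk d Z)"
  using assms unfolding convex_def block_prod_def
  by (simp add: linear_add[OF linear_block_proj] linear_scale[OF linear_block_proj])

lemma closed_block_prod:
  assumes "\<forall>r\<in>{1..d}. closed (Z r)"
  shows "closed (block_prod blk d Z)"
proof -
  have "block_prod blk d Z = (\<Inter>r\<in>{1..d}. block_proj blk r -` Z r)"
    unfolding block_prod_def by auto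
  moreover have "closed (block_proj blk r -` Z r)" if "r \<in> {1..d}" for r
    using assms that linear_block_proj[unfolded linear_conv_bounded_linear]
    by (intro continuous_closed_vimage) (auto intro: linear_continuous_at)
  ultimately show ?thesis by auto
qed

lemma bounded_block_prod:
  fixes blk :: "'n::finite \<Rightarrow> nat"
  assumes "\<forall>i. blk i \<in> {1..d}" and "\<forall>r\<in>{1..d}. bounded (Z r)"
  shows "bounded (block_prod blk d Z)"
proof -
  obtain R where R: "\<And>r v. r \<in> {1..d} \<Longrightarrow> v \<in> Z r \<Longrightarrow> norm v \<le> R"
    using bounded_UN[of "{1..d}" Z] assms(2) unfolding bounded_iff by blast
  have "norm x \<le> real CARD('n) * R" if "x \<in> block_prod blk d Z" for x
  proof -
    have "\<bar>x $ i\<bar> \<le> R" for i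
      using component_le_norm_cart[of "block_proj blk (blk i) x" i] R[of "blk i"] assms(1) that
      unfolding block_prod_def by (force simp: block_proj_nth)
    then show ?thesis
      using norm_le_l1_cart[of x] sum_mono[of UNIV "\<lambda>i. \<bar>x $ i\<bar>" "\<lambda>_. R"] by simp
  qed
  then show ?thesis unfolding bounded_iff by blast
qed

lemma compact_block_prod:
  assumes "\<forall>i. blk i \<in> {1..d}" and "\<forall>r\<in>{1..d}. compact (Z r)"
  shows "compact (block_prod blk d Z)"
  using assms closed_block_prod bounded_block_prod compact_imp_closed
  by (metis compact_eq_bounded_closed)

lemma block_prod_replace_block:
  assumes "p \<in> block_prod blk d Z" and "z \<in> block_prod blk d Z"
  shows "p + block_proj blk r (z - p) \<in> block_prod blk d Z"
proof -
  have "block_proj blk r' (p + block_proj blk r (z - p))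
      = (if r' = r then block_proj blk r' z else block_proj blk r' p)" for r'
    by (auto simp: vec_eq_iff block_proj_nth)
  then show ?thesis using assms unfolding block_prod_def by auto
qed

lemma inner_mult_block_vec:
  "(u * block_vec blk d c) \<bullet> v = (\<Sum>r\<in>{1..d}. c r * (u \<bullet> block_proj blk r v))"
  unfolding block_vec_def block_proj_def
  by (simp add: sum_distrib_left inner_sum_left inner_vec_def mult_ac sum.swap[of _ UNIV])

lemma norm_block_vec_mult_sq:
  "norm (block_vec blk d c * v)^2 = (\<Sum>r\<in>{1..d}. (c r)^2 * norm (block_proj blk r v)^2)"
proof -
  have "norm (block_vec blk d c * v)^2
      = (\<Sum>i\<in>UNIV. \<Sum>r\<in>{1..d}. if blk i = r then (c r)^2 * (v $ i)^2 else 0)"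
    unfolding power2_norm_eq_sum_cart
    by (intro sum.cong refl) (auto simp: block_vec_nth power_mult_distrib)
  also have "\<dots> = (\<Sum>r\<in>{1..d}. (c r)^2 * norm (block_proj blk r v)^2)"
    unfolding power2_norm_eq_sum_cart block_proj_nth sum_distrib_left
    by (subst sum.swap) (auto intro!: sum.cong)
  finally show ?thesis .
qed

lemma norm_block_proj_le_block_bound:
  assumes "compact X" "continuous_on X F" "y \<in> X" "r \<in> {1..d}"
  shows "norm (block_proj blk r (F y)) \<le> block_bound blk d X F"
proof -
  have "continuous_on X (block_proj blk r \<circ> F)"
    using assms(2) linear_continuous_on[OF linear_block_proj[unfolded linear_conv_bounded_linear]]
    by (rule continuous_on_compose)
  then have "compact ((block_proj blk r \<circ> F) ` X)"
    using assms(1) by (rule compact_continuous_image)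
  then have "bdd_above ((\<lambda>y. norm (block_proj blk r (F y))) ` X)"
    by (auto dest!: compact_imp_bounded simp: bounded_iff bdd_above_def)
  then have "norm (block_proj blk r (F y)) \<le> (SUP z\<in>X. norm (block_proj blk r (F z)))"
    by (rule cSUP_upper[OF assms(3)])
  also have "\<dots> \<le> block_bound blk d X F"
    unfolding block_bound_def using assms(4) by (intro Max_ge) auto
  finally show ?thesis .
qed

lemma closest_point_block_prod_weighted:
  assumes "convex (block_prod blk d Z)" "closed (block_prod blk d Z)"
    and "z \<in> block_prod blk d Z" and "\<forall>r\<in>{1..d}. 0 \<le> c r"
  shows "((y - closest_point (block_prod blk d Z) y) * block_vec blk d c)
           \<bullet> (z - closest_point (block_prod blk d Z) y) \<le> 0"
proof -
  define p where "p = closest_point (block_prod blk d Z) y"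
  have "p \<in> block_prod blk d Z"
    unfolding p_def using assms(2,3) closest_point_in_set by blast
  have "(y - p) \<bullet> block_proj blk r (z - p) \<le> 0" for r
  proof -
    have "p + block_proj blk r (z - p) \<in> block_prod blk d Z"
      using block_prod_replace_block[OF \<open>p \<in> block_prod blk d Z\<close> assms(3)] .
    from closest_point_dot[OF assms(1,2) this, of y] show ?thesis by (simp add: p_def)
  qed
  then show ?thesis
    unfolding inner_mult_block_vec p_def[symmetric]
    using assms(4) by (intro sum_nonpos) (simp add: mult_nonneg_nonpos)
qed

lemma norm_mult_le_cart:
  fixes W u :: "real^'n"
  assumes "\<forall>i. \<bar>W $ i\<bar> \<le> h"
  shows "norm (W * u) \<le> h * norm u"
proof -
  have "0 \<le> h" using assms abs_ge_zero order_trans by blast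
  have "norm (W * u) \<le> norm (h *\<^sub>R u)"
    using assms \<open>0 \<le> h\<close>
    by (intro norm_le_componentwise_cart) (auto simp: abs_mult mult_right_mono)
  with \<open>0 \<le> h\<close> show ?thesis by simp
qed

lemma weighted_inner_le:
  fixes W u v :: "real^'n"
  assumes "\<forall>i. \<bar>W $ i\<bar> \<le> h"
  shows "(u * W) \<bullet> v \<le> h * norm u * norm v"
proof -
  have "(u * W) \<bullet> v \<le> norm (W * u) * norm v"
    using norm_cauchy_schwarz[of "W * u" v] by (simp add: mult.commute)
  also have "\<dots> \<le> h * norm u * norm v"
    using norm_mult_le_cart[OF assms] by (simp add: mult_right_mono)
  finally show ?thesis .
qed

lemma weighted_inner_self_ge:
  fixes W u :: "real^'n"
  assumes "\<forall>i. l \<le> W $ i"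
  shows "l * norm u ^ 2 \<le> (u * W) \<bullet> u"
  unfolding power2_norm_eq_sum_cart inner_vec_def sum_distrib_left
  using assms by (intro sum_mono) (simp add: power2_eq_square mult_right_mono mult_ac)

lemma weighted_inner_self_le:
  fixes W u :: "real^'n"
  assumes "\<forall>i. W $ i \<le> h"
  shows "(u * W) \<bullet> u \<le> h * norm u ^ 2"
  unfolding power2_norm_eq_sum_cart inner_vec_def sum_distrib_left
  using assms by (intro sum_mono) (simp add: power2_eq_square mult_right_mono mult_ac)

lemma norm_add_sq_le: "norm (u + v) ^ 2 \<le> 2 * (norm u ^ 2 + norm v ^ 2)"
  for u v :: "'a::real_normed_vector"
proof -
  have "norm (u + v) ^ 2 \<le> (norm u + norm v) ^ 2"
    by (simp add: norm_triangle_ineq power_mono)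
  also have "\<dots> \<le> 2 * (norm u ^ 2 + norm v ^ 2)"
    using sum_squares_bound[of "norm u" "norm v"] by (simp add: power2_sum)
  finally show ?thesis .
qed

text \<open>The case M = 0 is excluded by the hypothesis, since l / 0 = 0.\<close>

lemma sq_mult_le_of_le_quarter_sqrt:
  fixes \<eta> l M :: real
  assumes "0 < \<eta>" and "0 \<le> M" and "\<eta> \<le> 1/4 * sqrt (l / M)"
  shows "16 * \<eta>^2 * M \<le> l"
proof -
  have "0 < 4 * \<eta>" using assms(1) by simp
  also have "4 * \<eta> \<le> sqrt (l / M)" using assms(3) by simp
  finally have pos: "0 < l / M" by simp
  have "(4 * \<eta>)^2 \<le> sqrt (l / M) ^ 2"
    using \<open>4 * \<eta> \<le> sqrt (l / M)\<close> \<open>0 < 4 * \<eta>\<close> by (intro power_mono) auto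
  then have le: "16 * \<eta>^2 \<le> l / M" using pos by (simp add: power_mult_distrib)
  have "0 < M" using pos assms(2) by (cases "M = 0") auto
  with le show ?thesis by (simp add: le_divide_eq)
qed

lemma rescaled_operator_diff_sq_le:
  fixes F :: "real^'n \<Rightarrow> real^'n" and a :: "nat \<Rightarrow> real^'n \<Rightarrow> real"
  assumes F_lip: "L-lipschitz_on X F" and a_lip: "\<forall>r\<in>{1..d}. \<alpha>-lipschitz_on X (a r)"
    and A_le: "\<forall>i. \<bar>block_vec blk d (\<lambda>r. a r y) $ i\<bar> \<le> h"
    and F_bound: "\<forall>r\<in>{1..d}. norm (block_proj blk r (F y')) \<le> B"
    and "y \<in> X" "y' \<in> X"
  shows "norm (block_vec blk d (\<lambda>r. a r y) * F y - block_vec blk d (\<lambda>r. a r y') * F y') ^ 2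
           \<le> 2 * (h^2 * L^2 + \<alpha>^2 * B^2 * real d) * norm (y - y') ^ 2"
proof -
  define E where "E = norm (y - y')"
  define u where "u = block_vec blk d (\<lambda>r. a r y) * (F y - F y')"
  define v where "v = block_vec blk d (\<lambda>r. a r y - a r y') * F y'"
  have "0 \<le> h" using A_le abs_ge_zero order_trans by blast
  have "norm u \<le> h * norm (F y - F y')"
    unfolding u_def using A_le by (rule norm_mult_le_cart)
  also have "\<dots> \<le> h * (L * E)"
    using lipschitz_on_normD[OF F_lip \<open>y \<in> X\<close> \<open>y' \<in> X\<close>] \<open>0 \<le> h\<close>
    by (simp add: E_def mult_left_mono)
  finally have u_sq: "norm u ^ 2 \<le> h^2 * L^2 * E^2"
    using power_mono[of "norm u" "h * (L * E)" 2] by (simp add: power_mult_distrib)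
  have "norm v ^ 2 = (\<Sum>r\<in>{1..d}. (a r y - a r y')^2 * norm (block_proj blk r (F y'))^2)"
    unfolding v_def by (rule norm_block_vec_mult_sq)
  also have "\<dots> \<le> (\<Sum>r\<in>{1..d}. (\<alpha> * E)^2 * B^2)"
  proof (intro sum_mono mult_mono)
    fix r assume "r \<in> {1..d}"
    then have "\<bar>a r y - a r y'\<bar> \<le> \<alpha> * E"
      using lipschitz_onD[OF bspec[OF a_lip] \<open>y \<in> X\<close> \<open>y' \<in> X\<close>]
      by (simp add: E_def dist_norm dist_real_def)
    then show "(a r y - a r y')^2 \<le> (\<alpha> * E)^2"
      by (metis abs_ge_zero power2_abs power_mono)
    show "norm (block_proj blk r (F y'))^2 \<le> B^2"
      using F_bound \<open>r \<in> {1..d}\<close> by (simp add: power_mono)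
  qed auto
  finally have v_sq: "norm v ^ 2 \<le> \<alpha>^2 * B^2 * real d * E^2"
    by (simp add: power_mult_distrib mult_ac)
  have "block_vec blk d (\<lambda>r. a r y) * F y - block_vec blk d (\<lambda>r. a r y') * F y' = u + v"
    unfolding u_def v_def block_vec_diff[symmetric] by (simp add: algebra_simps)
  then show ?thesis
    using norm_add_sq_le[of u v] u_sq v_sq by (simp add: E_def algebra_simps)
qed

text \<open>In the application p = hat x^(t), q = hat x^(t+1), x = x^(t), s is the Minty point
  and G, H are the current and previous operator values; the hypotheses are the
  weighted projection inequalities characterising q and x.\<close>

lemma optimistic_step_inequality:
  fixes p q s x G H W :: "real^'n" and \<eta> :: real
  assumes "((p - \<eta> *\<^sub>R G - q) * W) \<bullet> (s - q) \<le> 0"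
    and "((p - \<eta> *\<^sub>R H - x) * W) \<bullet> (q - x) \<le> 0"
  shows "\<eta> * ((G * W) \<bullet> (x - s))
    \<le> 1/2 * (((p - s) * W) \<bullet> (p - s) - ((q - s) * W) \<bullet> (q - s))
       - 1/2 * (((x - p) * W) \<bullet> (x - p) + ((x - q) * W) \<bullet> (x - q))
       + \<eta> * (((G - H) * W) \<bullet> (x - q))"
proof -
  have "1/2 * (((p - s) * W) \<bullet> (p - s) - ((q - s) * W) \<bullet> (q - s))
       - 1/2 * (((x - p) * W) \<bullet> (x - p) + ((x - q) * W) \<bullet> (x - q))
       + \<eta> * (((G - H) * W) \<bullet> (x - q)) - \<eta> * ((G * W) \<bullet> (x - s))
     = - (((p - \<eta> *\<^sub>R G - q) * W) \<bullet> (s - q)) - (((p - \<eta> *\<^sub>R H - x) * W) \<bullet> (q - x))"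
    unfolding inner_vec_def
    by (simp add: sum_subtractf[symmetric] sum.distrib[symmetric] sum_distrib_left
        sum_negf[symmetric] algebra_simps)
  with assms show ?thesis by linarith
qed

text \<open>The sequence g abstracts the rescaled operator A(x^(t)) o F(x^(t)): the analysis
  only uses the bound K on its increments along the trajectory.\<close>

locale weighted_optimistic_gd =
  fixes X :: "(real^'n) set" and W :: "real^'n" and g x xh :: "nat \<Rightarrow> real^'n"
    and l h \<eta> K :: real
  assumes convex_X: "convex X" and closed_X: "closed X"
    and projection_weighted_vi:
      "\<And>y z. z \<in> X \<Longrightarrow> ((y - closest_point X y) * W) \<bullet> (z - closest_point X y) \<le> 0"
    and weight_ge: "\<forall>i. l \<le> W $ i" and weight_le: "\<forall>i. W $ i \<le> h"
    and l_pos: "0 < l" and eta_pos: "0 < \<eta>"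
    and operator_diff:
      "\<And>t. 1 \<le> t \<Longrightarrow> norm (g t - g (t - 1)) ^ 2 \<le> K * norm (x t - x (t - 1)) ^ 2"
    and step_size: "8 * \<eta>^2 * h * K \<le> l"
    and x0_in: "x 0 \<in> X" and xh1: "xh 1 = x 0"
    and x_step: "\<And>t. 1 \<le> t \<Longrightarrow> x t = closest_point X (xh t - \<eta> *\<^sub>R g (t - 1))"
    and xh_step: "\<And>t. 1 \<le> t \<Longrightarrow> xh (t + 1) = closest_point X (xh t - \<eta> *\<^sub>R g t)"
begin

definition weighted_sq_norm :: "real^'n \<Rightarrow> real" where
  "weighted_sq_norm u = (u * W) \<bullet> u"

lemma xh_in: "1 \<le> t \<Longrightarrow> xh t \<in> X"
proof (induction t rule: dec_induct)
  case base
  show ?case using x0_in xh1 by simp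
next
  case (step t)
  show ?case
    using xh_step[OF step.hyps(1)] closest_point_in_set[OF closed_X] x0_in by auto
qed

lemma weight_abs_le: "\<forall>i. \<bar>W $ i\<bar> \<le> h"
proof
  show "\<bar>W $ i\<bar> \<le> h" for i
    using weight_ge weight_le l_pos by (smt (verit))
qed

lemma prediction_error_le:
  assumes "1 \<le> t"
  shows "\<eta> * (((g t - g (t - 1)) * W) \<bullet> (x t - xh (t + 1)))
           \<le> l/4 * (norm (x t - xh t) ^ 2 + norm (x (t - 1) - xh t) ^ 2)"
proof -
  define \<delta> where "\<delta> = norm (g t - g (t - 1))"
  have "0 \<le> h" using weight_abs_le abs_ge_zero order_trans by blast
  have "norm (x t - xh (t + 1))
      = dist (closest_point X (xh t - \<eta> *\<^sub>R g (t - 1))) (closest_point X (xh t - \<eta> *\<^sub>R g t))"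
    using x_step[OF assms] xh_step[OF assms] by (simp add: dist_norm)
  also have "\<dots> \<le> dist (xh t - \<eta> *\<^sub>R g (t - 1)) (xh t - \<eta> *\<^sub>R g t)"
    using closest_point_lipschitz[OF convex_X closed_X] x0_in by blast
  also have "\<dots> = \<eta> * \<delta>"
    using eta_pos by (simp add: \<delta>_def dist_norm norm_minus_commute flip: scaleR_diff_right)
  finally have gap: "norm (x t - xh (t + 1)) \<le> \<eta> * \<delta>" .
  have "\<eta> * (((g t - g (t - 1)) * W) \<bullet> (x t - xh (t + 1))) \<le> \<eta> * (h * \<delta> * (\<eta> * \<delta>))"
    using weighted_inner_le[OF weight_abs_le, of "g t - g (t - 1)" "x t - xh (t + 1)"] gap eta_pos \<open>0 \<le> h\<close>
    by (simp add: \<delta>_def mult_left_mono order_trans)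
  also have "\<dots> = \<eta>^2 * h * \<delta>^2" by (simp add: power2_eq_square)
  also have "\<dots> \<le> \<eta>^2 * h * (K * norm (x t - x (t - 1)) ^ 2)"
    using operator_diff[OF assms] \<open>0 \<le> h\<close> by (simp add: \<delta>_def mult_left_mono)
  also have "\<dots> \<le> l/8 * norm (x t - x (t - 1)) ^ 2"
    using mult_right_mono[of "\<eta>^2 * h * K" "l/8" "norm (x t - x (t - 1)) ^ 2"] step_size
    by (simp add: mult.assoc)
  also have "\<dots> \<le> l/8 * (2 * (norm (x t - xh t) ^ 2 + norm (x (t - 1) - xh t) ^ 2))"
    using norm_add_sq_le[of "x t - xh t" "xh t - x (t - 1)"] l_pos
    by (simp add: norm_minus_commute mult_left_mono)
  also have "\<dots> = l/4 * (norm (x t - xh t) ^ 2 + norm (x (t - 1) - xh t) ^ 2)" by simp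
  finally show ?thesis .
qed

text \<open>Arranged so that, after summation over t, both the weighted distance to xs and
  the gap norm (x (t - 1) - xh t) telescope.\<close>

lemma one_step_bound:
  assumes "1 \<le> t" and "xs \<in> X"
  shows "\<eta> * ((g t * W) \<bullet> (x t - xs))
         + l/4 * (norm (x t - xh t) ^ 2 + norm (x t - xh (t + 1)) ^ 2)
     \<le> (weighted_sq_norm (xh t - xs) - weighted_sq_norm (xh (t + 1) - xs)) / 2
       + l/4 * (norm (x (t - 1) - xh t) ^ 2 - norm (x t - xh (t + 1)) ^ 2)"
proof -
  have "((xh t - \<eta> *\<^sub>R g t - xh (t + 1)) * W) \<bullet> (xs - xh (t + 1)) \<le> 0"
    using projection_weighted_vi[OF assms(2), of "xh t - \<eta> *\<^sub>R g t"] xh_step[OF assms(1)]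
    by simp
  moreover have "((xh t - \<eta> *\<^sub>R g (t - 1) - x t) * W) \<bullet> (xh (t + 1) - x t) \<le> 0"
    using projection_weighted_vi[OF xh_in, of "t + 1" "xh t - \<eta> *\<^sub>R g (t - 1)"]
      x_step[OF assms(1)]
    by simp
  ultimately have three_point: "\<eta> * ((g t * W) \<bullet> (x t - xs))
    \<le> 1/2 * (weighted_sq_norm (xh t - xs) - weighted_sq_norm (xh (t + 1) - xs))
       - 1/2 * (weighted_sq_norm (x t - xh t) + weighted_sq_norm (x t - xh (t + 1)))
       + \<eta> * (((g t - g (t - 1)) * W) \<bullet> (x t - xh (t + 1)))"
    unfolding weighted_sq_norm_def by (rule optimistic_step_inequality)
  have lower: "l * norm u ^ 2 \<le> weighted_sq_norm u" for u
    unfolding weighted_sq_norm_def using weight_ge by (rule weighted_inner_self_ge)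
  show ?thesis
    using three_point lower[of "x t - xh t"] lower[of "x t - xh (t + 1)"]
      prediction_error_le[OF assms(1)]
    unfolding distrib_left right_diff_distrib times_divide_eq_left by argo
qed

theorem sum_sq_gaps_le:
  assumes "xs \<in> X" and "0 \<le> (\<Sum>t=1..T. (g t * W) \<bullet> (x t - xs))"
  shows "(\<Sum>t=1..T. norm (x t - xh t) ^ 2 + norm (x t - xh (t + 1)) ^ 2)
           \<le> 2 * h * norm (x 0 - xs) ^ 2 / l"
    (is "?S \<le> _")
proof -
  define D where "D t = weighted_sq_norm (xh t - xs)" for t
  define b where "b t = norm (x (t - 1) - xh t) ^ 2" for t
  have telescope: "(\<Sum>t=1..T. f t - f (t + 1)) = f 1 - f (T + 1)" for f :: "nat \<Rightarrow> real"
    by (induction T) auto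
  have "l/4 * ?S \<le> \<eta> * (\<Sum>t=1..T. (g t * W) \<bullet> (x t - xs)) + l/4 * ?S"
    using assms(2) eta_pos by simp
  also have "\<dots> = (\<Sum>t=1..T. \<eta> * ((g t * W) \<bullet> (x t - xs))
                    + l/4 * (norm (x t - xh t) ^ 2 + norm (x t - xh (t + 1)) ^ 2))"
    by (simp only: sum_distrib_left sum.distrib[symmetric])
  also have "\<dots> \<le> (\<Sum>t=1..T. (D t - D (t + 1)) / 2 + l/4 * (b t - b (t + 1)))"
    using one_step_bound[OF _ assms(1)] by (intro sum_mono) (simp add: D_def b_def)
  also have "\<dots> = (D 1 - D (T + 1)) / 2 + l/4 * (b 1 - b (T + 1))"
    unfolding sum.distrib sum_divide_distrib[symmetric] sum_distrib_left[symmetric] telescope ..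
  also have "\<dots> \<le> h * norm (x 0 - xs) ^ 2 / 2"
  proof -
    have "D 1 \<le> h * norm (x 0 - xs) ^ 2"
      unfolding D_def weighted_sq_norm_def xh1 using weight_le by (rule weighted_inner_self_le)
    moreover have "0 \<le> D (T + 1)"
      using weighted_inner_self_ge[OF weight_ge, of "xh (T + 1) - xs"] l_pos
      unfolding D_def weighted_sq_norm_def by (smt (verit) zero_le_power2 mult_nonneg_nonneg)
    moreover have "l/4 * (b 1 - b (T + 1)) \<le> 0"
      using l_pos xh1 by (simp add: b_def)
    ultimately show ?thesis by argo
  qed
  finally show ?thesis using l_pos by (simp add: field_simps)
qed

end

locale rescaled_optimistic_gd =
  fixes blk :: "'n::finite \<Rightarrow> nat" and d :: nat
    and Z :: "nat \<Rightarrow> (real^'n) set"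
    and F :: "real^'n \<Rightarrow> real^'n"
    and a w :: "nat \<Rightarrow> real^'n \<Rightarrow> real"
    and L \<alpha> l h \<eta> :: real
    and x xh :: "nat \<Rightarrow> real^'n"
  assumes blk_range: "\<forall>i. blk i \<in> {1..d}"
    and blk_nonempty: "\<forall>r\<in>{1..d}. \<exists>i. blk i = r"
    and Z_convex: "\<forall>r\<in>{1..d}. convex (Z r)"
    and Z_compact: "\<forall>r\<in>{1..d}. compact (Z r)"
    and F_lip: "L-lipschitz_on (block_prod blk d Z) F"
    and a_lip: "\<forall>r\<in>{1..d}. \<alpha>-lipschitz_on (block_prod blk d Z) (a r)"
    and l_pos: "0 < l"
    and A_bounds: "\<forall>y\<in>block_prod blk d Z. \<forall>i.
        l \<le> block_vec blk d (\<lambda>r. a r y) $ i \<and> block_vec blk d (\<lambda>r. a r y) $ i \<le> h"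
    and W_bounds: "\<forall>y\<in>block_prod blk d Z. \<forall>i.
        l \<le> block_vec blk d (\<lambda>r. w r y) $ i \<and> block_vec blk d (\<lambda>r. w r y) $ i \<le> h"
    and \<eta>_pos: "0 < \<eta>"
    and \<eta>_le: "\<eta> \<le> 1/4 * sqrt (l / (h^3 * L^2 + h * (block_bound blk d (block_prod blk d Z) F)^2 * \<alpha>^2 * real d))"
    and x0: "x 0 \<in> block_prod blk d Z"
    and xh1: "xh 1 = x 0"
    and step_x: "\<forall>t\<ge>1. x t = closest_point (block_prod blk d Z)
        (xh t - \<eta> *\<^sub>R (block_vec blk d (\<lambda>r. a r (x (t - 1))) * F (x (t - 1))))"
    and step_xh: "\<forall>t\<ge>1. xh (t + 1) = closest_point (block_prod blk d Z)
        (xh t - \<eta> *\<^sub>R (block_vec blk d (\<lambda>r. a r (x t)) * F (x t)))"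
begin

abbreviation "X \<equiv> block_prod blk d Z"
abbreviation "B \<equiv> block_bound blk d X F"
abbreviation "rescaling y \<equiv> block_vec blk d (\<lambda>r. a r y)"
abbreviation "weights y \<equiv> block_vec blk d (\<lambda>r. w r y)"

definition operator_diff_const :: real where
  "operator_diff_const = 2 * (h^2 * L^2 + \<alpha>^2 * B^2 * real d)"

lemma compact_X: "compact X"
  using compact_block_prod[OF blk_range Z_compact] .

lemma closed_X: "closed X"
  using compact_X by (rule compact_imp_closed)

lemma convex_X: "convex X"
  using convex_block_prod[OF Z_convex] .

lemma l_le_h: "l \<le> h"
  using A_bounds x0 order_trans by blast

lemma x_in: "x t \<in> X"
proof (cases "t = 0")
  case False
  then show ?thesis
    using step_x closest_point_in_set[OF closed_X] x0 by (metis empty_iff less_one not_le)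
qed (use x0 in simp)

lemma rescaled_operator_diff_le:
  assumes "y \<in> X" "y' \<in> X"
  shows "norm (rescaling y * F y - rescaling y' * F y') ^ 2
           \<le> operator_diff_const * norm (y - y') ^ 2"
  unfolding operator_diff_const_def
proof (rule rescaled_operator_diff_sq_le[OF F_lip a_lip _ _ assms])
  show "\<forall>i. \<bar>rescaling y $ i\<bar> \<le> h"
  proof
    fix i
    have "l \<le> rescaling y $ i" "rescaling y $ i \<le> h" using A_bounds assms(1) by auto
    then show "\<bar>rescaling y $ i\<bar> \<le> h" using l_pos by (simp add: abs_le_iff)
  qed
  show "\<forall>r\<in>{1..d}. norm (block_proj blk r (F y')) \<le> B"
    using norm_block_proj_le_block_bound[OF compact_X lipschitz_on_continuous_on[OF F_lip]
        assms(2)]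
    by blast
qed

lemma step_size: "8 * \<eta>^2 * h * operator_diff_const \<le> l"
proof -
  have "16 * \<eta>^2 * (h^3 * L^2 + h * B^2 * \<alpha>^2 * real d) \<le> l"
    using l_pos l_le_h by (intro sq_mult_le_of_le_quarter_sqrt[OF \<eta>_pos _ \<eta>_le]) simp
  then show ?thesis
    unfolding operator_diff_const_def by (simp add: power3_eq_cube power2_eq_square algebra_simps)
qed

lemma weighted_optimistic_gd_at:
  assumes "xs \<in> X"
  shows "weighted_optimistic_gd X (weights xs) (\<lambda>t. rescaling (x t) * F (x t)) x xh l h \<eta>
           operator_diff_const"
proof
  have "\<forall>i. 0 \<le> weights xs $ i"
    using W_bounds assms l_pos by (meson less_le_trans less_imp_le)
  then have "\<forall>r\<in>{1..d}. 0 \<le> w r xs"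
    by (rule nonneg_block_weights[OF blk_nonempty])
  then show "((y - closest_point X y) * weights xs) \<bullet> (z - closest_point X y) \<le> 0"
    if "z \<in> X" for y z
    by (rule closest_point_block_prod_weighted[OF convex_X closed_X that])
  show "\<forall>i. l \<le> weights xs $ i" "\<forall>i. weights xs $ i \<le> h"
    using W_bounds assms by auto
  show "norm (rescaling (x t) * F (x t) - rescaling (x (t - 1)) * F (x (t - 1))) ^ 2
          \<le> operator_diff_const * norm (x t - x (t - 1)) ^ 2" for t
    using rescaled_operator_diff_le x_in by blast
  show "x t = closest_point X (xh t - \<eta> *\<^sub>R (rescaling (x (t - 1)) * F (x (t - 1))))"
    if "1 \<le> t" for t
    using step_x that by blast
  show "xh (t + 1) = closest_point X (xh t - \<eta> *\<^sub>R (rescaling (x t) * F (x t)))"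
    if "1 \<le> t" for t
    using step_xh that by blast
qed (fact convex_X closed_X l_pos \<eta>_pos step_size x0 xh1)+

end

theorem corollary2:
  fixes blk :: "'n::finite \<Rightarrow> nat" and d :: nat
    and Z :: "nat \<Rightarrow> (real^'n) set"
    and F :: "real^'n \<Rightarrow> real^'n"
    and a w :: "nat \<Rightarrow> real^'n \<Rightarrow> real"
    and L \<alpha> l h \<eta> :: real
    and x xh :: "nat \<Rightarrow> real^'n"
  assumes blk_range: "\<forall>i. blk i \<in> {1..d}"
    and blk_nonempty: "\<forall>r\<in>{1..d}. \<exists>i. blk i = r"
    and Z_sub: "\<forall>r\<in>{1..d}. Z r \<subseteq> block_space blk r"
    and Z_ne: "\<forall>r\<in>{1..d}. Z r \<noteq> {}"
    and Z_convex: "\<forall>r\<in>{1..d}. convex (Z r)"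
    and Z_compact: "\<forall>r\<in>{1..d}. compact (Z r)"
    and F_lip: "L-lipschitz_on (block_prod blk d Z) F"
    and a_lip: "\<forall>r\<in>{1..d}. \<alpha>-lipschitz_on (block_prod blk d Z) (a r)"
    and l_pos: "0 < l"
    and A_bounds: "\<forall>y\<in>block_prod blk d Z. \<forall>i.
        l \<le> block_vec blk d (\<lambda>r. a r y) $ i \<and> block_vec blk d (\<lambda>r. a r y) $ i \<le> h"
    and W_bounds: "\<forall>y\<in>block_prod blk d Z. \<forall>i.
        l \<le> block_vec blk d (\<lambda>r. w r y) $ i \<and> block_vec blk d (\<lambda>r. w r y) $ i \<le> h"
    and minty: "\<forall>(T::nat) (xs::nat \<Rightarrow> real^'n). (\<forall>t\<in>{1..T}. xs t \<in> block_prod blk d Z) \<longrightarrow>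
        (\<exists>xstar\<in>block_prod blk d Z. 0 \<le> (\<Sum>t=1..T. (xs t - xstar) \<bullet>
           (F (xs t) * block_vec blk d (\<lambda>r. a r (xs t)) * block_vec blk d (\<lambda>r. w r xstar))))"
    and \<eta>_pos: "0 < \<eta>"
    and \<eta>_le: "\<eta> \<le> 1/4 * sqrt (l / (h^3 * L^2 + h * (block_bound blk d (block_prod blk d Z) F)^2 * \<alpha>^2 * real d))"
    and x0: "x 0 \<in> block_prod blk d Z"
    and xh1: "xh 1 = x 0"
    and step_x: "\<forall>t\<ge>1. x t = closest_point (block_prod blk d Z)
        (xh t - \<eta> *\<^sub>R (block_vec blk d (\<lambda>r. a r (x (t - 1))) * F (x (t - 1))))"
    and step_xh: "\<forall>t\<ge>1. xh (t + 1) = closest_point (block_prod blk d Z)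
        (xh t - \<eta> *\<^sub>R (block_vec blk d (\<lambda>r. a r (x t)) * F (x t)))"
  shows "\<forall>T::nat. (\<Sum>t=1..T. norm (x t - xh t)^2 + norm (x t - xh (t + 1))^2)
           \<le> 2 * (diameter (block_prod blk d Z))^2 * h / l"
proof
  fix T :: nat
  interpret rescaled_optimistic_gd blk d Z F a w L \<alpha> l h \<eta> x xh
    by (unfold_locales; fact assms)
  obtain xs where "xs \<in> X"
    and "0 \<le> (\<Sum>t=1..T. (x t - xs) \<bullet> (F (x t) * rescaling (x t) * weights xs))"
    using minty x_in by blast
  interpret weighted_optimistic_gd X "weights xs" "\<lambda>t. rescaling (x t) * F (x t)" x xh l h \<eta>
      operator_diff_const
    using \<open>xs \<in> X\<close> by (rule weighted_optimistic_gd_at)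
  have "(\<Sum>t=1..T. norm (x t - xh t)^2 + norm (x t - xh (t + 1))^2)
          \<le> 2 * h * norm (x 0 - xs)^2 / l" (is "?S \<le> _")
    using sum_sq_gaps_le \<open>xs \<in> X\<close> \<open>0 \<le> _\<close> by (simp add: inner_commute mult_ac)
  also have "\<dots> \<le> 2 * (diameter X)^2 * h / l"
    using diameter_bounded_bound[OF compact_imp_bounded[OF compact_X] x0 \<open>xs \<in> X\<close>] l_pos l_le_h
    by (simp add: dist_norm divide_right_mono mult_left_mono power_mono)
  finally show "?S \<le> 2 * (diameter X)^2 * h / l" .
qed

end
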